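(* Let $n\in\mathbb N$ and put $n_0:=n$; let $\mathbf m=(m_1,\ldots,m_p)\in\mathbb N^p$, $\boldsymbol\varepsilon=(\varepsilon_1,\ldots,\varepsilon_p)\in\{\pm1\}^p$ and $|x|<1$. Then \[ n\int_0^x t^{n-1}dt\,w_{\varepsilon_1}w_0^{m_1-1}w_{\varepsilon_2}w_0^{m_2-1}\cdots w_{\varepsilon_p}w_0^{m_p-1} =(-1)^p\sum_{n\ge n_1\ge\cdots\ge n_p\ge1}x^{n_p}\prod_{j=1}^p\frac{1+\varepsilon_j(-1)^{n_{j-1}+n_j}}{n_j^{m_j}} \] \[ +\frac12\sum_{j=1}^p(-1)^{j-1}\,\mathrm{Mi}_{m_p,\ldots,m_j}\big(-\mathbf q(\varepsilon_{j+1},\ldots,\varepsilon_p),-1;x\big)\big(1-\varepsilon_1\cdots\varepsilon_j(-1)^n\big)M^\star_n\big(m_1,\ldots,m_{j-1};-\mathbf p(\varepsilon_2,\ldots,\varepsilon_j)\big) \] \[ +\frac12\sum_{j=1}^p(-1)^{j-1}\,\mathrm{Mi}_{m_p,\ldots,m_j}\big(\mathbf q(\varepsilon_{j+1},\ldots,\varepsilon_p),1;x\big)\big(1+\varepsilon_1\cdots\varepsilon_j(-1)^n\big)M^\star_n\big(m_1,\ldots,m_{j-1};\mathbf p(\varepsilon_2,\ldots,\varepsilon_j)\big), \] where for $j=p$ the sign vector of $\mathrm{Mi}$ is just $(\mp1)$ resp. $(1)$, and for $j=1$ the $M^\star_n$ factor is $1$.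
   Context: Iterated integrals: $\int_a^b f_q\cdots f_1:=\int_{a<t_q<\cdots<t_1<b}f_q(t_q)\cdots f_1(t_1)$ (leftmost form carries the smallest variable); $w_0=dt/t$, $w_{-1}=2\,dt/(1-t^2)$, $w_1=2t\,dt/(1-t^2)$, $w_0^{0}$ means absent. For $\boldsymbol\varepsilon=(\varepsilon_1,\ldots,\varepsilon_r)\in\{\pm1\}^r$: $\mathbf p(\boldsymbol\varepsilon)=(\varepsilon_1\varepsilon_2\cdots\varepsilon_r,\varepsilon_2\cdots\varepsilon_r,\ldots,\varepsilon_{r-1}\varepsilon_r,\varepsilon_r)$, $\mathbf q(\boldsymbol\varepsilon)=(\varepsilon_1\cdots\varepsilon_r,\varepsilon_1\cdots\varepsilon_{r-1},\ldots,\varepsilon_1\varepsilon_2,\varepsilon_1)$; these are empty for empty input, and $a\boldsymbol\varepsilon=(a\varepsilon_1,\ldots,a\varepsilon_r)$. Multiple $M$-harmonic star sum: $M^\star_n(\mathbf k;\boldsymbol\varepsilon)=\sum_{n\ge n_1\ge\cdots\ge n_r\ge1}\prod_j(1+\varepsilon_j(-1)^{n_j})/n_j^{k_j}$, $M^\star_n(\emptyset;\emptyset)=1$. Multiple $M$-polylogarithm: $\mathrm{Mi}_{\mathbf k}(\boldsymbol\varepsilon;x)=\sum_{n_1>\cdots>n_r>0}x^{n_1}\prod_j(1+\varepsilon_j(-1)^{n_j})/n_j^{k_j}$. *)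

theory Defs
  imports "HOL-Analysis.Analysis"
begin

text \<open>Differential forms (as densities): w0 = dt/t, w(-1) = 2dt/(1-t^2), w1 = 2t dt/(1-t^2).\<close>
definition wform :: "int \<Rightarrow> real \<Rightarrow> real" where
  "wform e t = (if e = 0 then 1 / t else if e = -1 then 2 / (1 - t\<^sup>2) else 2 * t / (1 - t\<^sup>2))"

definition oint :: "(real \<Rightarrow> real) \<Rightarrow> real \<Rightarrow> real" where
  "oint f x = interval_lebesgue_integral lborel (ereal 0) (ereal x) f"

text \<open>itint_rev [f1, f2, ..., fq] x = integral over 0 < t_q < ... < t_1 < x of f_q(t_q)...f_1(t_1).\<close>
fun itint_rev :: "(real \<Rightarrow> real) list \<Rightarrow> real \<Rightarrow> real" where
  "itint_rev [] x = 1"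
| "itint_rev (f # gs) x = oint (\<lambda>t. f t * itint_rev gs t) x"

text \<open>Iterated integral with the paper's convention: the leftmost form carries the smallest variable.\<close>
definition itint :: "(real \<Rightarrow> real) list \<Rightarrow> real \<Rightarrow> real" where
  "itint fs x = itint_rev (rev fs) x"

definition wword :: "nat \<Rightarrow> nat list \<Rightarrow> int list \<Rightarrow> (real \<Rightarrow> real) list" where
  "wword n ms es = (\<lambda>t. t ^ (n - 1)) #
     concat (map (\<lambda>(m, e). wform e # replicate (m - 1) (wform 0)) (zip ms es))"

definition pvec :: "int list \<Rightarrow> int list" where
  "pvec es = map (\<lambda>i. prod_list (drop i es)) [0..<length es]"

definition qvec :: "int list \<Rightarrow> int list" where
  "qvec es = map (\<lambda>i. prod_list (take (length es - i) es)) [0..<length es]"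

fun Mstar :: "nat \<Rightarrow> nat list \<Rightarrow> int list \<Rightarrow> real" where
  "Mstar n [] [] = 1"
| "Mstar n (k # ks) (e # es) =
     (\<Sum>n1 = 1..n. (1 + of_int e * (-1) ^ n1) / real n1 ^ k * Mstar n1 ks es)"
| "Mstar n _ _ = 0"

fun Mstrict :: "nat \<Rightarrow> nat list \<Rightarrow> int list \<Rightarrow> real" where
  "Mstrict N [] [] = 1"
| "Mstrict N (k # ks) (e # es) =
     (\<Sum>n1 \<in> {1..<N}. (1 + of_int e * (-1) ^ n1) / real n1 ^ k * Mstrict n1 ks es)"
| "Mstrict N _ _ = 0"

fun Mi :: "nat list \<Rightarrow> int list \<Rightarrow> real \<Rightarrow> real" where
  "Mi (k # ks) (e # es) x =
     (\<Sum>N. x ^ N * ((1 + of_int e * (-1) ^ N) / real N ^ k) * Mstrict N ks es)"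
| "Mi _ _ x = 0"

fun Cchain :: "nat \<Rightarrow> nat list \<Rightarrow> int list \<Rightarrow> real \<Rightarrow> real" where
  "Cchain n [] [] x = x ^ n"
| "Cchain n (m # ms) (e # es) x =
     (\<Sum>n1 = 1..n. (1 + of_int e * (-1) ^ (n + n1)) / real n1 ^ m * Cchain n1 ms es x)"
| "Cchain n _ _ x = 0"

end

theory Submission
  imports Defs "HOL-Analysis.FPS_Convergence"
begin

(*
  On ]-1, 1[ every form is a power series, w_e t = \<Sum>k (1 - e (-1)^k) t^k for e = \<plusminus>1, so each
  integration step of the iterated integral maps power series to power series.  Integrating
  against a block w_e w_0^(m-1) turns a coefficient sequence b into
    N \<mapsto> (\<Sum>k<N. b k (1 + e (-1)^(N+k))) / N^m,
  hence n times the left-hand side is the power series obtained from x^n by applying the blocks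
  one after the other.  For the first block, the coefficient of x^k in x^n is the indicator of
  k = n, and the resulting condition n < N is rewritten as "all N" minus "N \<le> n": the
  coefficients split into those of a multiple M-polylogarithm minus a combination, with weights
  (1 + \<sigma>(-1)^N)/N^m where \<sigma> = e\<^sub>1 (-1)^n, of the coefficients of the shorter word
  started at N = 1, ..., n.  The right-hand side satisfies the same recursion, and the theorem
  follows by induction on p.
*)

lemma conv_radius_mono:
  fixes f g :: "nat \<Rightarrow> 'a::{banach, real_normed_div_algebra}"
  assumes "\<And>n. norm (f n) \<le> norm (g n)"
  shows "conv_radius g \<le> conv_radius f"
proof (rule conv_radius_geI_ex')
  fix r :: real
  assume "0 < r" "ereal r < conv_radius g"
  then have "summable (\<lambda>n. norm (g n * of_real r ^ n))"
    by (intro abs_summable_in_conv_radius) simp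
  then show "summable (\<lambda>n. f n * of_real r ^ n)"
    by (rule summable_norm_cancel[OF summable_comparison_test'])
      (simp add: norm_mult mult_right_mono assms)
qed

lemma fps_conv_radius_integral:
  fixes f :: "'a::{banach, real_normed_field} fps"
  shows "fps_conv_radius f \<le> fps_conv_radius (fps_integral f a)"
proof -
  have "fps_conv_radius f \<le> fps_conv_radius (fps_shift 1 (fps_integral f a))"
    unfolding fps_conv_radius_def
  proof (rule conv_radius_mono)
    fix n
    have "norm (1 + of_nat n :: 'a) = 1 + real n"
      using norm_of_nat[of "Suc n"] by simp
    then show "norm (fps_nth (fps_shift 1 (fps_integral f a)) n) \<le> norm (fps_nth f n)"
      by (simp add: norm_mult norm_inverse mult_left_le_one_le inverse_le_1_iff)
  qed
  then show ?thesis by simp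
qed

lemma one_le_conv_radius_bounded:
  fixes f :: "nat \<Rightarrow> 'a::{banach, real_normed_div_algebra}"
  assumes "\<And>n. norm (f n) \<le> C"
  shows "1 \<le> conv_radius f"
proof (rule conv_radius_geI_ex')
  fix r :: real
  assume "0 < r" "ereal r < 1"
  then have "summable (\<lambda>n. C * r ^ n)"
    by (intro summable_mult summable_geometric) simp
  moreover have "norm (f n * of_real r ^ n) \<le> C * r ^ n" for n
    using \<open>0 < r\<close> by (simp add: norm_mult norm_power mult_right_mono assms)
  ultimately show "summable (\<lambda>n. f n * of_real r ^ n)"
    by (blast intro: summable_norm_cancel summable_comparison_test')
qed

lemma ereal_abs_less_fps_conv_radius:
  "\<bar>t\<bar> < 1 \<Longrightarrow> 1 \<le> fps_conv_radius f \<Longrightarrow> ereal \<bar>t\<bar> < fps_conv_radius f"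
  using less_le_trans[of "ereal \<bar>t\<bar>" "ereal 1"] by (simp add: one_ereal_def)

lemma oint_cong:
  assumes "\<And>t. t \<noteq> 0 \<Longrightarrow> \<bar>t\<bar> < \<bar>x\<bar> \<Longrightarrow> f t = g t"
  shows "oint f x = oint g x"
  unfolding oint_def
  by (rule interval_integral_cong)
    (use assms in \<open>auto simp: einterval_def min_def max_def split: if_splits\<close>)

lemma oint_eval_fps:
  fixes f :: "real fps"
  assumes "ereal \<bar>x\<bar> < fps_conv_radius f"
  shows "oint (eval_fps f) x = eval_fps (fps_integral0 f) x"
proof -
  have inside: "ereal \<bar>t\<bar> < fps_conv_radius f" if "t \<in> {min 0 x..max 0 x}" for t
    using that le_less_trans[OF _ assms, of "ereal \<bar>t\<bar>"] by auto
  have "interval_lebesgue_integral lborel (ereal 0) (ereal x) (eval_fps f)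
      = eval_fps (fps_integral0 f) x - eval_fps (fps_integral0 f) 0"
  proof (rule interval_integral_FTC_finite)
    show "continuous_on {min 0 x..max 0 x} (eval_fps f)"
      by (rule continuous_on_subset[OF continuous_on_eval_fps]) (use inside in auto)
  next
    fix t
    assume "min 0 x \<le> t" "t \<le> max 0 x"
    then have "ereal \<bar>t\<bar> < fps_conv_radius f"
      using inside by simp
    then have "ereal \<bar>t\<bar> < fps_conv_radius (fps_integral0 f)"
      using fps_conv_radius_integral[of f 0] by (rule order.strict_trans2)
    then show "(eval_fps (fps_integral0 f) has_vector_derivative eval_fps f t)
        (at t within {min 0 x..max 0 x})"
      using has_field_derivative_eval_fps[of t "fps_integral0 f"]
      by (simp add: fps_deriv_fps_integral has_real_derivative_iff_has_vector_derivative)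
  qed
  then show ?thesis
    by (simp add: oint_def eval_fps_at_0 zero_ereal_def)
qed

text \<open>For \<open>e = \<plusminus>1\<close>: \<open>2/(1 - t\<^sup>2) = 1/(1 - t) + 1/(1 + t)\<close> and
  \<open>2t/(1 - t\<^sup>2) = 1/(1 - t) - 1/(1 + t)\<close>.\<close>
definition wform_fps :: "int \<Rightarrow> real fps" where
  "wform_fps e = Abs_fps (\<lambda>k. 1 - of_int e * (-1) ^ k)"

lemma fps_conv_radius_wform_fps:
  assumes "e \<in> {-1, 1}"
  shows "1 \<le> fps_conv_radius (wform_fps e)"
  unfolding fps_conv_radius_def wform_fps_def fps_nth_Abs_fps
proof (rule one_le_conv_radius_bounded)
  fix k
  show "norm (1 - of_int e * (-1) ^ k :: real) \<le> 2"
    using assms by (cases "even k") auto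
qed

lemma eval_fps_wform_fps:
  assumes "e \<in> {-1, 1}" "\<bar>t\<bar> < 1"
  shows "eval_fps (wform_fps e) t = wform e t"
proof -
  have "(\<lambda>k. t ^ k - of_int e * (-t) ^ k) sums (1 / (1 - t) - of_int e * (1 / (1 + t)))"
    using geometric_sums[of t] geometric_sums[of "-t"] assms(2) by (intro sums_diff sums_mult) auto
  moreover have "(\<lambda>k. t ^ k - of_int e * (-t) ^ k) = (\<lambda>k. fps_nth (wform_fps e) k * t ^ k)"
    by (simp add: wform_fps_def power_minus[of t] algebra_simps)
  moreover have "1 - t\<^sup>2 = (1 - t) * (1 + t)" "1 - t \<noteq> 0" "1 + t \<noteq> 0"
    using assms(2) by (auto simp: power2_eq_square algebra_simps)
  then have "1 / (1 - t) - of_int e * (1 / (1 + t)) = wform e t"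
    using assms(1) by (auto simp: wform_def field_simps)
  ultimately show ?thesis
    unfolding eval_fps_def by (simp add: sums_iff)
qed

lemma oint_wform_eval_fps:
  assumes "e \<in> {-1, 1}" "1 \<le> fps_conv_radius f" "\<bar>x\<bar> < 1"
    and "\<And>t. \<bar>t\<bar> < 1 \<Longrightarrow> F t = eval_fps f t"
  shows "oint (\<lambda>t. wform e t * F t) x = eval_fps (fps_integral0 (f * wform_fps e)) x"
proof -
  have radius: "1 \<le> fps_conv_radius (f * wform_fps e)"
    using fps_conv_radius_mult[of f "wform_fps e"] fps_conv_radius_wform_fps[OF assms(1)] assms(2)
    by (auto simp: min_def split: if_splits)
  have "oint (\<lambda>t. wform e t * F t) x = oint (eval_fps (f * wform_fps e)) x"
  proof (rule oint_cong)
    fix t :: real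
    assume "\<bar>t\<bar> < \<bar>x\<bar>"
    then have "\<bar>t\<bar> < 1"
      using assms(3) by auto
    moreover have "ereal \<bar>t\<bar> < fps_conv_radius f"
      and "ereal \<bar>t\<bar> < fps_conv_radius (wform_fps e)"
      using \<open>\<bar>t\<bar> < 1\<close> assms(2) fps_conv_radius_wform_fps[OF assms(1)]
      by (simp_all add: ereal_abs_less_fps_conv_radius)
    ultimately show "wform e t * F t = eval_fps (f * wform_fps e) t"
      using assms(4) by (simp add: eval_fps_mult eval_fps_wform_fps[OF assms(1)])
  qed
  also have "\<dots> = eval_fps (fps_integral0 (f * wform_fps e)) x"
    using ereal_abs_less_fps_conv_radius[OF assms(3) radius] by (rule oint_eval_fps)
  finally show ?thesis .
qed

definition fps_integral_over_X :: "real fps \<Rightarrow> real fps" where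
  "fps_integral_over_X f = fps_integral0 (fps_shift 1 f)"

text \<open>At \<open>k = 0\<close> both sides vanish, the right one because \<open>x / 0 = 0\<close>.\<close>
lemma fps_nth_integral_over_X: "fps_nth (fps_integral_over_X f) k = fps_nth f k / real k"
  by (cases k) (simp_all add: fps_integral_over_X_def field_simps)

lemma fps_conv_radius_integral_over_X:
  "fps_conv_radius f \<le> fps_conv_radius (fps_integral_over_X f)"
  unfolding fps_integral_over_X_def using fps_conv_radius_integral[of "fps_shift 1 f" 0] by simp

lemma oint_w0_eval_fps:
  assumes "fps_nth f 0 = 0" "1 \<le> fps_conv_radius f" "\<bar>x\<bar> < 1"
    and "\<And>t. \<bar>t\<bar> < 1 \<Longrightarrow> F t = eval_fps f t"
  shows "oint (\<lambda>t. wform 0 t * F t) x = eval_fps (fps_integral_over_X f) x"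
proof -
  have f: "fps_X * fps_shift 1 f = f"
    using assms(1) by (intro fps_ext) simp
  have "oint (\<lambda>t. wform 0 t * F t) x = oint (eval_fps (fps_shift 1 f)) x"
  proof (rule oint_cong)
    fix t :: real
    assume "t \<noteq> 0" "\<bar>t\<bar> < \<bar>x\<bar>"
    then have "\<bar>t\<bar> < 1" "ereal \<bar>t\<bar> < fps_conv_radius (fps_shift 1 f)"
      using assms(2,3) by (simp_all add: ereal_abs_less_fps_conv_radius)
    then have "F t = t * eval_fps (fps_shift 1 f) t"
      using assms(4) eval_fps_mult[of t fps_X "fps_shift 1 f"] f by simp
    then show "wform 0 t * F t = eval_fps (fps_shift 1 f) t"
      using \<open>t \<noteq> 0\<close> by (simp add: wform_def)
  qed
  also have "\<dots> = eval_fps (fps_integral_over_X f) x"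
    unfolding fps_integral_over_X_def using assms(2,3)
    by (intro oint_eval_fps ereal_abs_less_fps_conv_radius) simp_all
  finally show ?thesis .
qed

fun itint_rev_with :: "(real \<Rightarrow> real) list \<Rightarrow> (real \<Rightarrow> real) \<Rightarrow> real \<Rightarrow> real" where
  "itint_rev_with [] F x = F x"
| "itint_rev_with (f # fs) F x = oint (\<lambda>t. f t * itint_rev_with fs F t) x"

lemma itint_rev_eq_with_1: "itint_rev fs x = itint_rev_with fs (\<lambda>_. 1) x"
  by (induction fs arbitrary: x) simp_all

lemma itint_rev_with_append:
  "itint_rev_with (fs @ gs) F x = itint_rev_with fs (itint_rev_with gs F) x"
  by (induction fs arbitrary: x) simp_all

definition wblock :: "nat \<Rightarrow> int \<Rightarrow> (real \<Rightarrow> real) list" where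
  "wblock m e = wform e # replicate (m - 1) (wform 0)"

lemma wword_eq_wblocks:
  "wword n ms es = (\<lambda>t. t ^ (n - 1)) # concat (map (case_prod wblock) (zip ms es))"
  unfolding wword_def wblock_def by (simp add: case_prod_beta')

lemma fps_nth_funpow_integral_over_X:
  "fps_nth ((fps_integral_over_X ^^ k) f) N = fps_nth f N / real N ^ k"
  by (induction k) (simp_all add: fps_nth_integral_over_X field_simps)

lemma fps_conv_radius_funpow_integral_over_X:
  "fps_conv_radius f \<le> fps_conv_radius ((fps_integral_over_X ^^ k) f)"
  by (induction k) (auto intro: order.trans[OF _ fps_conv_radius_integral_over_X])

lemma itint_rev_with_w0_power:
  assumes "fps_nth f 0 = 0" "1 \<le> fps_conv_radius f"
    and "\<And>t. \<bar>t\<bar> < 1 \<Longrightarrow> F t = eval_fps f t" "\<bar>x\<bar> < 1"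
  shows "itint_rev_with (replicate k (wform 0)) F x = eval_fps ((fps_integral_over_X ^^ k) f) x"
  using assms(4)
proof (induction k arbitrary: x)
  case 0
  then show ?case using assms(3) by simp
next
  case (Suc k)
  have "fps_nth ((fps_integral_over_X ^^ k) f) 0 = 0"
    using assms(1) by (simp add: fps_nth_funpow_integral_over_X)
  moreover have "1 \<le> fps_conv_radius ((fps_integral_over_X ^^ k) f)"
    using assms(2) fps_conv_radius_funpow_integral_over_X by (rule order.trans)
  ultimately show ?case
    using oint_w0_eval_fps[OF _ _ Suc.prems Suc.IH] by simp
qed

definition block_coeffs :: "int \<Rightarrow> nat \<Rightarrow> (nat \<Rightarrow> real) \<Rightarrow> nat \<Rightarrow> real" where
  "block_coeffs e m b N = (\<Sum>k<N. b k * (1 + of_int e * (-1) ^ (N + k))) / real N ^ m"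

lemma block_coeffs_eq_fps:
  assumes "1 \<le> m"
  shows "Abs_fps (block_coeffs e m b)
    = (fps_integral_over_X ^^ (m - 1)) (fps_integral0 (Abs_fps b * wform_fps e))"
proof (rule fps_ext)
  fix N
  show "fps_nth (Abs_fps (block_coeffs e m b)) N
      = fps_nth ((fps_integral_over_X ^^ (m - 1)) (fps_integral0 (Abs_fps b * wform_fps e))) N"
  proof (cases N)
    case 0
    then show ?thesis by (simp add: block_coeffs_def fps_nth_funpow_integral_over_X)
  next
    case (Suc N')
    have parity: "(-1::real) ^ (N' - k) = (-1) ^ (N' + k)" if "k \<le> N'" for k
      using that by (simp add: minus_one_power_iff)
    have "fps_nth (Abs_fps b * wform_fps e) N' = (\<Sum>k<N. b k * (1 + of_int e * (-1) ^ (N + k)))"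
      unfolding fps_mult_nth Suc lessThan_Suc_atMost atLeast0AtMost
    proof (rule sum.cong[OF refl])
      fix k
      assume "k \<in> {..N'}"
      then show "fps_nth (Abs_fps b) k * fps_nth (wform_fps e) (N' - k)
          = b k * (1 + of_int e * (-1) ^ (Suc N' + k))"
        by (simp add: wform_fps_def parity)
    qed
    moreover have "real N ^ m = real N ^ (m - 1) * real N"
      using assms by (simp flip: power_Suc2)
    ultimately show ?thesis
      using Suc by (simp add: block_coeffs_def fps_nth_funpow_integral_over_X field_simps)
  qed
qed

lemma fps_conv_radius_block_coeffs:
  assumes "e \<in> {-1, 1}" "1 \<le> m" "1 \<le> fps_conv_radius (Abs_fps b)"
  shows "1 \<le> fps_conv_radius (Abs_fps (block_coeffs e m b))"
proof -
  have "1 \<le> fps_conv_radius (Abs_fps b * wform_fps e)"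
    using fps_conv_radius_mult[of "Abs_fps b" "wform_fps e"] fps_conv_radius_wform_fps[OF assms(1)] assms(3)
    by (auto simp: min_def split: if_splits)
  also have "\<dots> \<le> fps_conv_radius (fps_integral0 (Abs_fps b * wform_fps e))"
    by (rule fps_conv_radius_integral)
  also have "\<dots> \<le> fps_conv_radius (Abs_fps (block_coeffs e m b))"
    unfolding block_coeffs_eq_fps[OF assms(2)] by (rule fps_conv_radius_funpow_integral_over_X)
  finally show ?thesis .
qed

lemma itint_rev_with_wblock:
  assumes "e \<in> {-1, 1}" "1 \<le> m" "1 \<le> fps_conv_radius (Abs_fps b)"
    and "\<And>t. \<bar>t\<bar> < 1 \<Longrightarrow> F t = eval_fps (Abs_fps b) t" "\<bar>x\<bar> < 1"
  shows "itint_rev_with (rev (wblock m e)) F x = eval_fps (Abs_fps (block_coeffs e m b)) x"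
proof -
  define g where "g = fps_integral0 (Abs_fps b * wform_fps e)"
  have radius: "1 \<le> fps_conv_radius g"
    using fps_conv_radius_mult[of "Abs_fps b" "wform_fps e"] fps_conv_radius_wform_fps[OF assms(1)]
      assms(3) fps_conv_radius_integral[of "Abs_fps b * wform_fps e" 0]
    unfolding g_def by (auto simp: min_def split: if_splits)
  have "itint_rev_with (rev (wblock m e)) F x
      = itint_rev_with (replicate (m - 1) (wform 0)) (itint_rev_with [wform e] F) x"
    by (simp add: wblock_def itint_rev_with_append)
  also have "\<dots> = eval_fps ((fps_integral_over_X ^^ (m - 1)) g) x"
    using radius assms(5)
    by (intro itint_rev_with_w0_power) (simp_all add: g_def oint_wform_eval_fps[OF assms(1,3) _ assms(4)])
  finally show ?thesis
    unfolding g_def block_coeffs_eq_fps[OF assms(2)] .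
qed

fun word_coeffs :: "(nat \<Rightarrow> real) \<Rightarrow> nat list \<Rightarrow> int list \<Rightarrow> nat \<Rightarrow> real" where
  "word_coeffs b (m # ms) (e # es) = word_coeffs (block_coeffs e m b) ms es"
| "word_coeffs b _ _ = b"

lemma fps_conv_radius_word_coeffs:
  assumes "length ms = length es" "\<forall>m \<in> set ms. 1 \<le> m" "set es \<subseteq> {-1, 1}"
    and "1 \<le> fps_conv_radius (Abs_fps b)"
  shows "1 \<le> fps_conv_radius (Abs_fps (word_coeffs b ms es))"
  using assms
  by (induction ms es arbitrary: b rule: list_induct2) (simp_all add: fps_conv_radius_block_coeffs)

lemma itint_rev_with_wblocks:
  assumes "length ms = length es" "\<forall>m \<in> set ms. 1 \<le> m" "set es \<subseteq> {-1, 1}"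
    and "1 \<le> fps_conv_radius (Abs_fps b)"
    and "\<And>t. \<bar>t\<bar> < 1 \<Longrightarrow> F t = eval_fps (Abs_fps b) t" "\<bar>x\<bar> < 1"
  shows "itint_rev_with (rev (concat (map (case_prod wblock) (zip ms es)))) F x
    = eval_fps (Abs_fps (word_coeffs b ms es)) x"
  using assms
proof (induction ms es arbitrary: b F x rule: list_induct2)
  case Nil
  then show ?case by simp
next
  case (Cons m ms e es)
  let ?G = "itint_rev_with (rev (wblock m e)) F"
  have "?G t = eval_fps (Abs_fps (block_coeffs e m b)) t" if "\<bar>t\<bar> < 1" for t
    using Cons.prems that by (intro itint_rev_with_wblock) auto
  moreover have "1 \<le> fps_conv_radius (Abs_fps (block_coeffs e m b))"
    using Cons.prems by (intro fps_conv_radius_block_coeffs) auto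
  ultimately have "itint_rev_with (rev (concat (map (case_prod wblock) (zip ms es)))) ?G x
      = eval_fps (Abs_fps (word_coeffs (block_coeffs e m b) ms es)) x"
    using Cons.prems by (intro Cons.IH) auto
  then show ?case
    by (simp add: itint_rev_with_append)
qed

lemma word_coeffs_scale:
  "word_coeffs (\<lambda>k. c * b k) ms es = (\<lambda>k. c * word_coeffs b ms es k)"
proof (induction b ms es rule: word_coeffs.induct)
  case (1 b m ms e es)
  have "block_coeffs e m (\<lambda>k. c * b k) = (\<lambda>N. c * block_coeffs e m b N)"
    by (simp add: block_coeffs_def sum_distrib_left mult.assoc fun_eq_iff)
  then show ?case using 1 by simp
qed simp_all

lemma itint_wword_eq_eval_fps:
  assumes "1 \<le> n" "length ms = length es" "\<forall>m \<in> set ms. 1 \<le> m" "set es \<subseteq> {-1, 1}"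
    and "\<bar>x\<bar> < 1"
  shows "real n * itint (wword n ms es) x
    = eval_fps (Abs_fps (word_coeffs (fps_nth (fps_X ^ n)) ms es)) x"
proof -
  define b where "b = fps_nth (fps_integral0 (fps_X ^ (n - 1) :: real fps))"
  have b: "b = (\<lambda>k. inverse (real n) * fps_nth (fps_X ^ n) k)"
    using assms(1) by (simp add: b_def fps_integral0_fps_X_power fun_eq_iff)
  have radius: "1 \<le> fps_conv_radius (Abs_fps (word_coeffs (fps_nth (fps_X ^ n)) ms es))"
    using assms(2-4) by (intro fps_conv_radius_word_coeffs) (simp_all add: fps_nth_inverse)
  have "itint_rev_with [\<lambda>t. t ^ (n - 1)] (\<lambda>_. 1) = oint (\<lambda>s. s ^ (n - 1))"
    by (simp add: fun_eq_iff)
  then have "itint (wword n ms es) x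
      = itint_rev_with (rev (concat (map (case_prod wblock) (zip ms es))))
          (oint (\<lambda>s. s ^ (n - 1))) x"
    by (simp add: itint_def wword_eq_wblocks itint_rev_eq_with_1 itint_rev_with_append)
  also have "\<dots> = eval_fps (Abs_fps (word_coeffs b ms es)) x"
  proof (rule itint_rev_with_wblocks[OF assms(2-4) _ _ assms(5)])
    show "1 \<le> fps_conv_radius (Abs_fps b)"
      using fps_conv_radius_integral[of "fps_X ^ (n - 1) :: real fps" 0] by (simp add: b_def fps_nth_inverse)
    fix t :: real
    assume "\<bar>t\<bar> < 1"
    moreover have "eval_fps (fps_X ^ (n - 1)) = (\<lambda>s::real. s ^ (n - 1))"
      by (simp add: fun_eq_iff)
    ultimately show "oint (\<lambda>s. s ^ (n - 1)) t = eval_fps (Abs_fps b) t"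
      using oint_eval_fps[of t "fps_X ^ (n - 1)"] by (simp add: b_def fps_nth_inverse)
  qed
  also have "\<dots> = inverse (real n) * eval_fps (Abs_fps (word_coeffs (fps_nth (fps_X ^ n)) ms es)) x"
  proof -
    have "summable (\<lambda>k. word_coeffs (fps_nth (fps_X ^ n)) ms es k * x ^ k)"
      using summable_fps[of x "Abs_fps (word_coeffs (fps_nth (fps_X ^ n)) ms es)"]
        ereal_abs_less_fps_conv_radius[OF assms(5) radius]
      by simp
    then show ?thesis
      unfolding b word_coeffs_scale eval_fps_def by (simp add: suminf_mult[symmetric] mult.assoc)
  qed
  finally show ?thesis
    using assms(1) by simp
qed

lemma block_coeffs_diff_sum:
  "block_coeffs e m (\<lambda>k. b k - (\<Sum>i\<in>A. g i k))
    = (\<lambda>N. block_coeffs e m b N - (\<Sum>i\<in>A. block_coeffs e m (g i) N))"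
  by (simp add: block_coeffs_def fun_eq_iff left_diff_distrib sum_subtractf sum_distrib_right
      sum.swap[of _ A] diff_divide_distrib sum_divide_distrib)

lemma word_coeffs_diff_sum:
  "word_coeffs (\<lambda>k. b k - (\<Sum>i\<in>A. g i k)) ms es
    = (\<lambda>k. word_coeffs b ms es k - (\<Sum>i\<in>A. word_coeffs (g i) ms es k))"
proof (induction b ms es arbitrary: g rule: word_coeffs.induct)
  case (1 b m ms e es)
  then show ?case by (simp add: block_coeffs_diff_sum)
qed simp_all

lemma word_coeffs_snoc:
  "length ms = length es \<Longrightarrow>
    word_coeffs b (ms @ [m]) (es @ [e]) = block_coeffs e m (word_coeffs b ms es)"
  by (induction ms es arbitrary: b rule: list_induct2) simp_all

definition Mfactor :: "int \<Rightarrow> nat \<Rightarrow> nat \<Rightarrow> real" where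
  "Mfactor s m N = (1 + of_int s * (-1) ^ N) / real N ^ m"

lemma fps_conv_radius_Mfactor:
  assumes "s \<in> {-1, 1}"
  shows "1 \<le> fps_conv_radius (Abs_fps (Mfactor s m))"
  unfolding fps_conv_radius_def fps_nth_Abs_fps
proof (rule one_le_conv_radius_bounded)
  fix N
  have "\<bar>1 + of_int s * (-1::real) ^ N\<bar> \<le> 2"
    using assms by (cases "even N") auto
  moreover have "real N ^ m = 0 \<or> 1 \<le> real N ^ m"
    by (cases "N = 0"; cases "m = 0") (auto intro: one_le_power)
  ultimately show "norm (Mfactor s m N) \<le> 2"
    unfolding Mfactor_def by (auto simp: divide_le_eq intro: order.trans)
qed

lemma block_coeffs_X_power:
  assumes "1 \<le> m"
  shows "block_coeffs e m (fps_nth (fps_X ^ n))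
    = (\<lambda>K. Mfactor (e * (-1) ^ n) m K
        - (\<Sum>N\<in>{1..n}. Mfactor (e * (-1) ^ n) m N * fps_nth (fps_X ^ N) K))"
proof (rule ext)
  fix K
  have "(\<Sum>k<K. fps_nth (fps_X ^ n :: real fps) k * (1 + of_int e * (-1) ^ (K + k)))
      = (if n < K then 1 + of_int e * (-1) ^ (K + n) else 0)"
    by (simp add: if_distrib[of "\<lambda>z. z * _"] cong: if_cong)
  moreover have "(\<Sum>N\<in>{1..n}. Mfactor (e * (-1) ^ n) m N * fps_nth (fps_X ^ N :: real fps) K)
      = (if K \<in> {1..n} then Mfactor (e * (-1) ^ n) m K else 0)"
    by (simp add: if_distrib[of "\<lambda>z. _ * z"] cong: if_cong)
  moreover have "Mfactor (e * (-1) ^ n) m K = (1 + of_int e * (-1) ^ (K + n)) / real K ^ m"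
    by (simp add: Mfactor_def power_add mult_ac)
  ultimately show "block_coeffs e m (fps_nth (fps_X ^ n)) K
      = Mfactor (e * (-1) ^ n) m K - (\<Sum>N\<in>{1..n}. Mfactor (e * (-1) ^ n) m N * fps_nth (fps_X ^ N) K)"
    using assms by (cases "K = 0") (auto simp: block_coeffs_def Mfactor_def)
qed

fun Mi_coeffs :: "nat list \<Rightarrow> int list \<Rightarrow> nat \<Rightarrow> real" where
  "Mi_coeffs (k # ks) (s # ss) N = Mfactor s k N * Mstrict N ks ss"
| "Mi_coeffs _ _ N = 0"

lemma Mi_eq_eval_fps: "Mi ks ss x = eval_fps (Abs_fps (Mi_coeffs ks ss)) x"
  by (cases ks; cases ss) (simp_all add: eval_fps_def Mfactor_def mult_ac)

lemma prod_list_sign: "set l \<subseteq> {-1, 1::int} \<Longrightarrow> prod_list l \<in> {-1, 1}"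
  by (induction l) auto

text \<open>The second factor vanishes unless \<open>(-1)\<^sup>N = s\<close>, so \<open>(-1)\<^sup>N\<close> may be replaced by \<open>s\<close>
  in the first.\<close>
lemma sign_parity_factor:
  assumes "s \<in> {-1, 1}"
  shows "(1 + a * (-1::real) ^ N) * (1 + of_int s * (-1) ^ N) = (1 + a * of_int s) * (1 + of_int s * (-1) ^ N)"
  using assms by (cases "even N") (auto simp: algebra_simps)

lemma block_coeffs_Mi_coeffs:
  assumes "s \<in> {-1, 1}" "1 \<le> k"
  shows "block_coeffs e m (Mi_coeffs (k # ks) (s # ss)) = Mi_coeffs (m # k # ks) (s * e # s # ss)"
proof (rule ext)
  fix N
  have "(\<Sum>j<N. Mi_coeffs (k # ks) (s # ss) j * (1 + of_int e * (-1) ^ (N + j)))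
      = (\<Sum>j\<in>{1..<N}. Mi_coeffs (k # ks) (s # ss) j * (1 + of_int e * (-1) ^ (N + j)))"
    using assms(2) by (simp add: Mfactor_def sum_shift_lb_Suc0_0_upt atLeast0LessThan)
  also have "\<dots> = (1 + of_int (s * e) * (-1) ^ N) * Mstrict N (k # ks) (s # ss)"
    unfolding Mstrict.simps sum_distrib_left
  proof (rule sum.cong[OF refl])
    fix j
    have "Mi_coeffs (k # ks) (s # ss) j * (1 + of_int e * (-1) ^ (N + j))
        = (1 + (of_int e * (-1) ^ N) * (-1::real) ^ j) * (1 + of_int s * (-1) ^ j)
          * (Mstrict j ks ss / real j ^ k)"
      by (simp add: Mfactor_def power_add mult_ac)
    also have "\<dots> = (1 + (of_int e * (-1) ^ N) * of_int s) * (1 + of_int s * (-1) ^ j)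
        * (Mstrict j ks ss / real j ^ k)"
      by (simp only: sign_parity_factor[OF assms(1)])
    finally show "Mi_coeffs (k # ks) (s # ss) j * (1 + of_int e * (-1) ^ (N + j))
        = (1 + of_int (s * e) * (-1) ^ N) * ((1 + of_int s * (-1) ^ j) / real j ^ k * Mstrict j ks ss)"
      by (simp add: mult_ac)
  qed
  finally show "block_coeffs e m (Mi_coeffs (k # ks) (s # ss)) N = Mi_coeffs (m # k # ks) (s * e # s # ss) N"
    by (simp add: block_coeffs_def Mfactor_def)
qed

lemma qvec_Nil [simp]: "qvec [] = []"
  by (simp add: qvec_def)

lemma qvec_snoc: "qvec (es @ [e]) = prod_list (es @ [e]) # qvec es"
proof -
  have "[0..<Suc (length es)] = 0 # map Suc [0..<length es]"
    by (metis map_Suc_upt upt_conv_Cons zero_less_Suc)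
  moreover have "map (\<lambda>i. prod_list (take (Suc (length es) - Suc i) (es @ [e]))) [0..<length es]
      = map (\<lambda>i. prod_list (take (length es - i) es)) [0..<length es]"
    by (rule map_cong) auto
  ultimately show ?thesis
    unfolding qvec_def by simp
qed

lemma pvec_Cons: "pvec (e # es) = prod_list (e # es) # pvec es"
proof -
  have "[0..<Suc (length es)] = 0 # map Suc [0..<length es]"
    by (metis map_Suc_upt upt_conv_Cons zero_less_Suc)
  then show ?thesis
    unfolding pvec_def by simp
qed

lemma word_coeffs_Mfactor:
  assumes "s \<in> {-1, 1}" "1 \<le> m"
    and "length ms = length es" "\<forall>k \<in> set ms. 1 \<le> k" "set es \<subseteq> {-1, 1}"
  shows "word_coeffs (Mfactor s m) ms es = Mi_coeffs (rev ms @ [m]) (map ((*) s) (qvec es) @ [s])"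
  using assms(3-5)
proof (induction ms arbitrary: es rule: rev_induct)
  case Nil
  then show ?case by (simp add: fun_eq_iff)
next
  case (snoc m' ms)
  obtain es' e' where es: "es = es' @ [e']"
    using snoc.prems(1) by (cases es rule: rev_exhaust) auto
  have len: "length ms = length es'"
    using snoc.prems(1) es by simp
  obtain k ks where k: "rev ms @ [m] = k # ks" "1 \<le> k"
    using snoc.prems(2) assms(2) by (cases "rev ms") auto
  obtain ss where ss: "map ((*) s) (qvec es') @ [s] = s * prod_list es' # ss"
    by (cases es' rule: rev_exhaust) (simp_all add: qvec_snoc)
  have sign: "s * prod_list es' \<in> {-1, 1}"
    using assms(1) prod_list_sign[of es'] snoc.prems(3) es by auto
  have "word_coeffs (Mfactor s m) (ms @ [m']) es
      = block_coeffs e' m' (Mi_coeffs (k # ks) (s * prod_list es' # ss))"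
    using snoc.IH[OF len] snoc.prems es
    by (simp add: word_coeffs_snoc[OF len] k(1) ss del: Mi_coeffs.simps)
  also have "\<dots> = Mi_coeffs (m' # k # ks) (s * prod_list es' * e' # s * prod_list es' # ss)"
    using sign k(2) by (rule block_coeffs_Mi_coeffs)
  finally have "word_coeffs (Mfactor s m) (ms @ [m']) es
      = Mi_coeffs (m' # k # ks) (s * prod_list es' * e' # s * prod_list es' # ss)" .
  moreover have "rev (ms @ [m']) @ [m] = m' # k # ks"
    using k(1) by simp
  moreover have "map ((*) s) (qvec es) @ [s] = s * prod_list es' * e' # s * prod_list es' # ss"
    using ss by (simp add: es qvec_snoc mult.assoc)
  ultimately show ?case
    by simp
qed

definition rhs_term :: "real \<Rightarrow> int \<Rightarrow> nat \<Rightarrow> nat list \<Rightarrow> int list \<Rightarrow> nat \<Rightarrow> real" where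
  "rhs_term x g n ms es j = (-1) ^ (j - 1)
     * Mi (rev (drop (j - 1) ms)) (map ((*) g) (qvec (drop j es)) @ [g]) x
     * (1 + of_int g * of_int (prod_list (take j es)) * (-1) ^ n)
     * Mstar n (take (j - 1) ms) (map ((*) g) (pvec (drop 1 (take j es))))"

definition rhs :: "real \<Rightarrow> nat \<Rightarrow> nat list \<Rightarrow> int list \<Rightarrow> real" where
  "rhs x n ms es = (-1) ^ length ms * Cchain n ms es x
     + 1/2 * (\<Sum>j = 1..length ms. rhs_term x (-1) n ms es j)
     + 1/2 * (\<Sum>j = 1..length ms. rhs_term x 1 n ms es j)"

lemma sum_Mfactor_Mstar:
  assumes "s \<in> {-1, 1}"
  shows "(\<Sum>N\<in>{1..n}. Mfactor \<sigma> m N * ((1 + of_int s * (-1) ^ N) * Mstar N ks ss))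
    = (1 + of_int \<sigma> * of_int s) * Mstar n (m # ks) (s # ss)"
proof -
  have "Mfactor \<sigma> m N * ((1 + of_int s * (-1) ^ N) * Mstar N ks ss)
      = (1 + of_int \<sigma> * of_int s) * ((1 + of_int s * (-1) ^ N) / real N ^ m * Mstar N ks ss)" for N
  proof -
    have "Mfactor \<sigma> m N * ((1 + of_int s * (-1) ^ N) * Mstar N ks ss)
        = (1 + of_int \<sigma> * (-1::real) ^ N) * (1 + of_int s * (-1) ^ N) * (Mstar N ks ss / real N ^ m)"
      by (simp add: Mfactor_def mult_ac)
    also have "\<dots> = (1 + of_int \<sigma> * of_int s) * (1 + of_int s * (-1) ^ N) * (Mstar N ks ss / real N ^ m)"
      by (simp only: sign_parity_factor[OF assms])
    finally show ?thesis
      by (simp add: mult_ac)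
  qed
  then show ?thesis
    by (simp add: sum_distrib_left)
qed

lemma sum_Mfactor_rhs_term:
  assumes g: "g \<in> {-1, 1}" and es: "set es \<subseteq> {-1, 1}" and j: "1 \<le> j" "j \<le> length es"
  shows "(\<Sum>N\<in>{1..n}. Mfactor (e * (-1) ^ n) m N * rhs_term x g N ms es j)
    = - rhs_term x g n (m # ms) (e # es) (Suc j)"
proof -
  define \<sigma> where "\<sigma> = e * (-1) ^ n"
  obtain a l where take_j: "take j es = a # l"
    using j by (cases es; cases j) auto
  define s where "s = g * prod_list (take j es)"
  have s: "s \<in> {-1, 1}"
    using g prod_list_sign[of "take j es"] es set_take_subset[of j es] by (auto simp: s_def)
  define A where "A = (-1) ^ (j - 1) * Mi (rev (drop (j - 1) ms)) (map ((*) g) (qvec (drop j es)) @ [g]) x"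
  define ks where "ks = take (j - 1) ms"
  define ss where "ss = map ((*) g) (pvec l)"
  have term_N: "rhs_term x g N ms es j = A * ((1 + of_int s * (-1) ^ N) * Mstar N ks ss)" for N
    unfolding rhs_term_def A_def ks_def ss_def s_def take_j by (simp add: mult_ac)
  have term_Suc: "rhs_term x g n (m # ms) (e # es) (Suc j)
      = - (A * ((1 + of_int \<sigma> * of_int s) * Mstar n (m # ks) (s # ss)))"
  proof -
    have "map ((*) g) (pvec (a # l)) = s # ss"
      by (simp add: pvec_Cons s_def ss_def take_j)
    moreover have "(-1::real) ^ j = - ((-1) ^ (j - 1))"
      "take j (m # ms) = m # ks" "drop j (m # ms) = drop (j - 1) ms"
      using j by (cases j; simp add: ks_def)+
    ultimately show ?thesis
      using take_j j
      by (simp add: rhs_term_def A_def ks_def \<sigma>_def s_def mult_ac del: Mstar.simps)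
  qed
  have "(\<Sum>N\<in>{1..n}. Mfactor \<sigma> m N * rhs_term x g N ms es j)
      = A * (\<Sum>N\<in>{1..n}. Mfactor \<sigma> m N * ((1 + of_int s * (-1) ^ N) * Mstar N ks ss))"
    unfolding term_N sum_distrib_left by (rule sum.cong[OF refl]) (rule mult.left_commute)
  also have "\<dots> = A * ((1 + of_int \<sigma> * of_int s) * Mstar n (m # ks) (s # ss))"
    by (simp only: sum_Mfactor_Mstar[OF s])
  also have "\<dots> = - rhs_term x g n (m # ms) (e # es) (Suc j)"
    unfolding term_Suc by simp
  finally show ?thesis
    unfolding \<sigma>_def .
qed

lemma rhs_Cons:
  fixes n :: nat and e :: int
  assumes "length ms = length es" "e \<in> {-1, 1}" "set es \<subseteq> {-1, 1}"
  defines "\<sigma> \<equiv> e * (-1) ^ n"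
  shows "rhs x n (m # ms) (e # es) = Mi (rev ms @ [m]) (map ((*) \<sigma>) (qvec es) @ [\<sigma>]) x
    - (\<Sum>N\<in>{1..n}. Mfactor \<sigma> m N * rhs x N ms es)"
proof -
  let ?p = "length ms"
  let ?T = "\<lambda>g j. rhs_term x g n (m # ms) (e # es) j"
  have \<sigma>: "\<sigma> \<in> {-1, 1}"
    using assms(2) by (cases "even n") (auto simp: \<sigma>_def)
  have shifted: "(\<Sum>j = 1..?p. \<Sum>N\<in>{1..n}. Mfactor \<sigma> m N * rhs_term x g N ms es j)
      = - (\<Sum>j = 1..?p. ?T g (Suc j))" if "g \<in> {-1, 1}" for g
    unfolding sum_negf[symmetric] \<sigma>_def
    by (intro sum.cong refl sum_Mfactor_rhs_term[OF that assms(3)]) (use assms(1) in auto)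
  have "(\<Sum>N\<in>{1..n}. Mfactor \<sigma> m N * rhs x N ms es)
      = (-1) ^ ?p * (\<Sum>N\<in>{1..n}. Mfactor \<sigma> m N * Cchain N ms es x)
        + 1/2 * (\<Sum>j = 1..?p. \<Sum>N\<in>{1..n}. Mfactor \<sigma> m N * rhs_term x (-1) N ms es j)
        + 1/2 * (\<Sum>j = 1..?p. \<Sum>N\<in>{1..n}. Mfactor \<sigma> m N * rhs_term x 1 N ms es j)"
    by (simp add: rhs_def algebra_simps sum.distrib sum_distrib_left) (subst (1 2) sum.swap, rule refl)
  also have "(\<Sum>N\<in>{1..n}. Mfactor \<sigma> m N * Cchain N ms es x) = Cchain n (m # ms) (e # es) x"
    by (simp add: Mfactor_def \<sigma>_def power_add mult_ac)
  finally have sum_rhs: "(\<Sum>N\<in>{1..n}. Mfactor \<sigma> m N * rhs x N ms es)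
      = (-1) ^ ?p * Cchain n (m # ms) (e # es) x
        - 1/2 * (\<Sum>j = 1..?p. ?T (-1) (Suc j)) - 1/2 * (\<Sum>j = 1..?p. ?T 1 (Suc j))"
    using shifted[of "-1"] shifted[of 1] by simp
  have first: "?T g 1 = Mi (rev ms @ [m]) (map ((*) g) (qvec es) @ [g]) x * (1 + of_int g * of_int \<sigma>)"
    for g
    by (simp add: rhs_term_def \<sigma>_def pvec_def mult_ac)
  have "Mi (rev ms @ [m]) (map ((*) \<sigma>) (qvec es) @ [\<sigma>]) x = 1/2 * ?T (-1) 1 + 1/2 * ?T 1 1"
    unfolding first using \<sigma> by auto
  moreover have "(\<Sum>j = 1..Suc ?p. ?T g j) = ?T g 1 + (\<Sum>j = 1..?p. ?T g (Suc j))" for g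
    using sum.atLeast_Suc_atMost[of 1 "Suc ?p" "?T g"] sum.shift_bounds_cl_Suc_ivl[of "?T g" 1 ?p]
    by simp
  ultimately show ?thesis
    unfolding sum_rhs by (simp add: rhs_def algebra_simps)
qed

lemma sums_eval_fps_Abs_fps:
  fixes b :: "nat \<Rightarrow> real"
  assumes "1 \<le> fps_conv_radius (Abs_fps b)" "\<bar>x\<bar> < 1"
  shows "(\<lambda>k. b k * x ^ k) sums eval_fps (Abs_fps b) x"
  using sums_eval_fps[of x "Abs_fps b"] ereal_abs_less_fps_conv_radius[OF assms(2,1)] by simp

lemma eval_word_coeffs_X_power_Cons:
  fixes n :: nat and e :: int
  assumes "length ms = length es" "1 \<le> m" "\<forall>k \<in> set ms. 1 \<le> k" "e \<in> {-1, 1}" "set es \<subseteq> {-1, 1}"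
    and "\<bar>x\<bar> < 1"
  defines "\<sigma> \<equiv> e * (-1) ^ n"
  shows "eval_fps (Abs_fps (word_coeffs (fps_nth (fps_X ^ n)) (m # ms) (e # es))) x
    = Mi (rev ms @ [m]) (map ((*) \<sigma>) (qvec es) @ [\<sigma>]) x
      - (\<Sum>N\<in>{1..n}. Mfactor \<sigma> m N
          * eval_fps (Abs_fps (word_coeffs (fps_nth (fps_X ^ N)) ms es)) x)"
proof -
  have \<sigma>: "\<sigma> \<in> {-1, 1}"
    using assms(4) by (cases "even n") (auto simp: \<sigma>_def)
  have coeffs: "word_coeffs (fps_nth (fps_X ^ n)) (m # ms) (e # es)
      = (\<lambda>k. word_coeffs (Mfactor \<sigma> m) ms es k
          - (\<Sum>N\<in>{1..n}. Mfactor \<sigma> m N * word_coeffs (fps_nth (fps_X ^ N)) ms es k))"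
    by (simp only: word_coeffs.simps block_coeffs_X_power[OF assms(2)] \<sigma>_def
        word_coeffs_diff_sum word_coeffs_scale)
  have "(\<lambda>k. word_coeffs (Mfactor \<sigma> m) ms es k * x ^ k)
      sums eval_fps (Abs_fps (word_coeffs (Mfactor \<sigma> m) ms es)) x"
    using assms(1,3,5,6) \<sigma>
    by (intro sums_eval_fps_Abs_fps fps_conv_radius_word_coeffs fps_conv_radius_Mfactor) simp_all
  then have Mi_sums: "(\<lambda>k. word_coeffs (Mfactor \<sigma> m) ms es k * x ^ k)
      sums Mi (rev ms @ [m]) (map ((*) \<sigma>) (qvec es) @ [\<sigma>]) x"
    unfolding Mi_eq_eval_fps word_coeffs_Mfactor[OF \<sigma> assms(2,1,3,5)] .
  have X_power_sums: "(\<lambda>k. word_coeffs (fps_nth (fps_X ^ N)) ms es k * x ^ k)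
      sums eval_fps (Abs_fps (word_coeffs (fps_nth (fps_X ^ N)) ms es)) x" for N
    using assms(1,3,5,6)
    by (intro sums_eval_fps_Abs_fps fps_conv_radius_word_coeffs) (simp_all add: fps_nth_inverse)
  have "(\<lambda>k. word_coeffs (fps_nth (fps_X ^ n)) (m # ms) (e # es) k * x ^ k)
      sums (Mi (rev ms @ [m]) (map ((*) \<sigma>) (qvec es) @ [\<sigma>]) x
        - (\<Sum>N\<in>{1..n}. Mfactor \<sigma> m N
          * eval_fps (Abs_fps (word_coeffs (fps_nth (fps_X ^ N)) ms es)) x))"
    unfolding coeffs left_diff_distrib sum_distrib_right mult.assoc
    by (rule sums_diff[OF Mi_sums sums_sum[OF sums_mult[OF X_power_sums]]])
  then show ?thesis
    unfolding eval_fps_def by (simp add: sums_iff)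
qed

lemma eval_word_coeffs_X_power_eq_rhs:
  assumes "1 \<le> n" "length ms = length es" "\<forall>m \<in> set ms. 1 \<le> m" "set es \<subseteq> {-1, 1}" "\<bar>x\<bar> < 1"
  shows "eval_fps (Abs_fps (word_coeffs (fps_nth (fps_X ^ n)) ms es)) x = rhs x n ms es"
  using assms(2-4,1)
proof (induction ms es arbitrary: n rule: list_induct2)
  case Nil
  then show ?case
    unfolding word_coeffs.simps fps_nth_inverse by (simp add: rhs_def)
next
  case (Cons m ms e es)
  have IH: "eval_fps (Abs_fps (word_coeffs (fps_nth (fps_X ^ N)) ms es)) x = rhs x N ms es"
    if "N \<in> {1..n}" for N
    using that Cons.prems by (intro Cons.IH) auto
  let ?\<sigma> = "e * (-1) ^ n"
  have "eval_fps (Abs_fps (word_coeffs (fps_nth (fps_X ^ n)) (m # ms) (e # es))) x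
      = Mi (rev ms @ [m]) (map ((*) ?\<sigma>) (qvec es) @ [?\<sigma>]) x
        - (\<Sum>N\<in>{1..n}. Mfactor ?\<sigma> m N
            * eval_fps (Abs_fps (word_coeffs (fps_nth (fps_X ^ N)) ms es)) x)"
    using Cons.hyps Cons.prems assms(5) by (intro eval_word_coeffs_X_power_Cons) simp_all
  also have "\<dots> = Mi (rev ms @ [m]) (map ((*) ?\<sigma>) (qvec es) @ [?\<sigma>]) x
        - (\<Sum>N\<in>{1..n}. Mfactor ?\<sigma> m N * rhs x N ms es)"
    using IH by (intro arg_cong2[where f = "(-)"] refl sum.cong) (simp_all only:)
  also have "\<dots> = rhs x n (m # ms) (e # es)"
    using Cons.hyps Cons.prems by (intro rhs_Cons[symmetric]) simp_all
  finally show ?case .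
qed

theorem mainTheorem9:
  fixes n :: nat and ms :: "nat list" and es :: "int list" and x :: real
  assumes "n \<ge> 1"
    and "\<forall>m \<in> set ms. m \<ge> 1"
    and "length es = length ms"
    and "set es \<subseteq> {-1, 1}"
    and "\<bar>x\<bar> < 1"
  shows "real n * itint (wword n ms es) x =
      (-1) ^ length ms * Cchain n ms es x
    + 1/2 * (\<Sum>j = 1..length ms. (-1) ^ (j - 1)
        * Mi (rev (drop (j - 1) ms)) (map uminus (qvec (drop j es)) @ [-1]) x
        * (1 - of_int (prod_list (take j es)) * (-1) ^ n)
        * Mstar n (take (j - 1) ms) (map uminus (pvec (drop 1 (take j es)))))
    + 1/2 * (\<Sum>j = 1..length ms. (-1) ^ (j - 1)
        * Mi (rev (drop (j - 1) ms)) (qvec (drop j es) @ [1]) x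
        * (1 + of_int (prod_list (take j es)) * (-1) ^ n)
        * Mstar n (take (j - 1) ms) (pvec (drop 1 (take j es))))"
proof -
  have "real n * itint (wword n ms es) x = rhs x n ms es"
    using assms itint_wword_eq_eval_fps eval_word_coeffs_X_power_eq_rhs by simp
  moreover have "(*) (-1::int) = uminus" "(*) (1::int) = id"
    by auto
  ultimately show ?thesis
    unfolding rhs_def rhs_term_def by simp
qed

end
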